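(* Let $\mathcal H$ be a finite-dimensional complex Hilbert space, $A$ Hermitian, $\rho$ a density operator and $|\phi\rangle$ a unit vector with $\langle\phi|\rho|\phi\rangle>0$, and define $C(\rho,A,\phi):=\big(\langle\Delta A_w\rangle^{\phi}_{\rho}\big)^2-\big(\langle\Delta A\rangle^{\phi}_{\rho}\big)^2$. Then: (i) $C(\rho,A,\phi)\ge0$; (ii) $C(\rho,A,\phi)=0$ when $\rho$ is pure; (iii) if $\mathcal H=\mathcal H_1\otimes\mathcal H_2$, $\rho=\rho_1\otimes\rho_2$, $|\phi\rangle=|\phi_1\rangle\otimes|\phi_2\rangle$ with $\langle\phi_j|\rho_j|\phi_j\rangle>0$, and $A_1,A_2$ are Hermitian on $\mathcal H_1,\mathcal H_2$ respectively, then $$C(\rho,A_1\otimes I+I\otimes A_2,\phi)=C(\rho,A_1\otimes I,\phi)+C(\rho,I\otimes A_2,\phi).$$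
   Context: For a density operator $\rho$, Hermitian $X$ and unit vector $|\phi\rangle$ with $\langle\phi|\rho|\phi\rangle>0$: $\big(\langle\Delta X\rangle^{\phi}_{\rho}\big)^2:=\operatorname{Tr}(X^2\rho)-\langle\phi|X\rho X|\phi\rangle$ and $\big(\langle\Delta X_w\rangle^{\phi}_{\rho}\big)^2:=\operatorname{Tr}(X^2\rho)-\frac{|\langle\phi|X\rho|\phi\rangle|^2}{\langle\phi|\rho|\phi\rangle}$. *)

theory Defs
  imports "HOL-Analysis.Analysis"
begin

text \<open>Finite-dimensional complex Hilbert spaces are modelled as complex^'n with a finite
  index type 'n; operators are complex matrices complex^'n^'n.\<close>

definition braket :: "complex^'n \<Rightarrow> complex^'n \<Rightarrow> complex" where
  "braket u v = (\<Sum>i\<in>UNIV. cnj (u$i) * v$i)"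

definition cadj :: "complex^'n^'m \<Rightarrow> complex^'m^'n" where
  "cadj A = (\<chi> i j. cnj (A$j$i))"

definition hermitian :: "complex^'n^'n \<Rightarrow> bool" where
  "hermitian A \<longleftrightarrow> cadj A = A"

definition ctrace :: "complex^'n^'n \<Rightarrow> complex" where
  "ctrace A = (\<Sum>i\<in>UNIV. A$i$i)"

definition unit_vec :: "complex^'n \<Rightarrow> bool" where
  "unit_vec v \<longleftrightarrow> braket v v = 1"

definition density :: "complex^'n^'n \<Rightarrow> bool" where
  "density \<rho> \<longleftrightarrow> hermitian \<rho> \<and>
     (\<forall>v. Im (braket v (\<rho> *v v)) = 0 \<and> 0 \<le> Re (braket v (\<rho> *v v))) \<and>
     ctrace \<rho> = 1"

definition outer :: "complex^'n \<Rightarrow> complex^'n \<Rightarrow> complex^'n^'n" where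
  "outer u v = (\<chi> i j. u$i * cnj (v$j))"

definition pure_state :: "complex^'n^'n \<Rightarrow> bool" where
  "pure_state \<rho> \<longleftrightarrow> (\<exists>\<psi>. unit_vec \<psi> \<and> \<rho> = outer \<psi> \<psi>)"

definition kron :: "complex^'a^'a \<Rightarrow> complex^'b^'b \<Rightarrow> complex^('a\<times>'b)^('a\<times>'b)" where
  "kron A B = (\<chi> p q. A$(fst p)$(fst q) * B$(snd p)$(snd q))"

definition vkron :: "complex^'a \<Rightarrow> complex^'b \<Rightarrow> complex^('a\<times>'b)" where
  "vkron u v = (\<chi> p. u$(fst p) * v$(snd p))"

text \<open>Squared (non-weak) variance  Tr(X^2 rho) - <phi|X rho X|phi>  (a real number for
  Hermitian X and density rho; we take real parts).\<close>
definition var_sq :: "complex^'n^'n \<Rightarrow> complex^'n^'n \<Rightarrow> complex^'n \<Rightarrow> real" where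
  "var_sq \<rho> X \<phi> = Re (ctrace (X ** X ** \<rho>)) - Re (braket \<phi> ((X ** \<rho> ** X) *v \<phi>))"

definition wvar_sq :: "complex^'n^'n \<Rightarrow> complex^'n^'n \<Rightarrow> complex^'n \<Rightarrow> real" where
  "wvar_sq \<rho> X \<phi> = Re (ctrace (X ** X ** \<rho>))
     - (cmod (braket \<phi> ((X ** \<rho>) *v \<phi>)))^2 / Re (braket \<phi> (\<rho> *v \<phi>))"

definition Cfun :: "complex^'n^'n \<Rightarrow> complex^'n^'n \<Rightarrow> complex^'n \<Rightarrow> real" where
  "Cfun \<rho> A \<phi> = wvar_sq \<rho> A \<phi> - var_sq \<rho> A \<phi>"

end

theory Submission
  imports Defs
begin

text \<open>Write \<open>Q(u,v) = \<langle>u|\<rho>|v\<rangle>\<close>. For Hermitian \<open>A\<close> the two variances share the term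
  \<open>Tr(A\<^sup>2\<rho>)\<close>, and \<open>C(\<rho>,A,\<phi>) = Q(A\<phi>,A\<phi>) - |Q(A\<phi>,\<phi>)|\<^sup>2/Q(\<phi>,\<phi>)\<close> is the diagonal of the
  Schur complement \<open>S(u,v) = Q(u,v) - Q(u,\<phi>) Q(\<phi>,v) / Q(\<phi>,\<phi>)\<close> of \<open>Q\<close> along \<open>\<phi>\<close>.
  Since \<open>S(u,u) = Q(w,w)\<close> for the component \<open>w\<close> of \<open>u\<close> that is \<open>Q\<close>-orthogonal to \<open>\<phi>\<close>, it is
  nonnegative; for \<open>\<rho> = |\<psi>\<rangle>\<langle>\<psi>|\<close> the form \<open>Q\<close> has rank one and \<open>S\<close> vanishes. For a product
  state, \<open>S\<close> is zero between \<open>A\<^sub>1\<phi>\<^sub>1 \<otimes> \<phi>\<^sub>2\<close> and \<open>\<phi>\<^sub>1 \<otimes> A\<^sub>2\<phi>\<^sub>2\<close>, so the diagonal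
  of \<open>S\<close> is additive on their sum. None of this uses that \<open>\<phi>\<close> is normalised.\<close>

lemma braket_cnj_swap: "braket v u = cnj (braket u v)"
  unfolding braket_def by (simp add: cnj_sum mult_ac)

lemma braket_add_left: "braket (x + y) z = braket x z + braket y z"
  unfolding braket_def by (simp add: sum.distrib distrib_right)

lemma braket_add_right: "braket z (x + y) = braket z x + braket z y"
  unfolding braket_def by (simp add: sum.distrib distrib_left)

lemma braket_diff_left: "braket (x - y) z = braket x z - braket y z"
  unfolding braket_def by (simp add: sum_subtractf left_diff_distrib)

lemma braket_diff_right: "braket z (x - y) = braket z x - braket z y"
  unfolding braket_def by (simp add: sum_subtractf right_diff_distrib)

lemma braket_scale_left: "braket (c *s x) z = cnj c * braket x z"
  unfolding braket_def by (simp add: sum_distrib_left mult_ac)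

lemma braket_scale_right: "braket z (c *s x) = c * braket z x"
  unfolding braket_def by (simp add: sum_distrib_left mult_ac)

lemma braket_matrix_vector_mult_cadj: "braket u (M *v v) = braket (cadj M *v u) v"
  unfolding braket_def matrix_vector_mult_def cadj_def
  by (simp add: sum_distrib_left sum_distrib_right cnj_sum mult_ac, subst sum.swap, simp add: mult_ac)

lemma hermitian_braket_swap: "hermitian A \<Longrightarrow> braket u (A *v v) = braket (A *v u) v"
  unfolding hermitian_def by (metis braket_matrix_vector_mult_cadj)

lemma hermitian_braket_cnj: "hermitian A \<Longrightarrow> braket v (A *v u) = cnj (braket u (A *v v))"
  by (metis braket_cnj_swap hermitian_braket_swap)

lemma hermitian_braket_diag_real:
  "hermitian A \<Longrightarrow> braket u (A *v u) = of_real (Re (braket u (A *v u)))"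
  by (metis Reals_cnj_iff complex_is_Real_iff hermitian_braket_cnj of_real_Re)

lemma hermitian_mat_1: "hermitian (mat 1)"
  unfolding hermitian_def cadj_def mat_def by (simp add: vec_eq_iff)

lemma hermitian_add: "hermitian A \<Longrightarrow> hermitian B \<Longrightarrow> hermitian (A + B)"
  unfolding hermitian_def cadj_def by (simp add: vec_eq_iff)

lemma hermitian_kron: "hermitian A \<Longrightarrow> hermitian B \<Longrightarrow> hermitian (kron A B)"
  unfolding hermitian_def cadj_def kron_def by (simp add: vec_eq_iff)

lemma density_hermitian: "density \<rho> \<Longrightarrow> hermitian \<rho>"
  unfolding density_def by simp

lemma density_braket_nonneg: "density \<rho> \<Longrightarrow> 0 \<le> Re (braket v (\<rho> *v v))"
  unfolding density_def by simp

definition schur_form :: "complex^'n^'n \<Rightarrow> complex^'n \<Rightarrow> complex^'n \<Rightarrow> complex^'n \<Rightarrow> complex"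
  where "schur_form \<rho> \<phi> u v =
    braket u (\<rho> *v v) - braket u (\<rho> *v \<phi>) * braket \<phi> (\<rho> *v v) / braket \<phi> (\<rho> *v \<phi>)"

lemma schur_form_add_left:
  "schur_form \<rho> \<phi> (x + y) v = schur_form \<rho> \<phi> x v + schur_form \<rho> \<phi> y v"
  unfolding schur_form_def by (simp add: braket_add_left add_divide_distrib algebra_simps)

lemma schur_form_add_right:
  "schur_form \<rho> \<phi> u (x + y) = schur_form \<rho> \<phi> u x + schur_form \<rho> \<phi> u y"
  unfolding schur_form_def
  by (simp add: matrix_vector_right_distrib braket_add_right add_divide_distrib algebra_simps)

lemma Re_schur_form_diag:
  assumes "hermitian \<rho>"
  shows "Re (schur_form \<rho> \<phi> u u) =
    Re (braket u (\<rho> *v u)) - (cmod (braket u (\<rho> *v \<phi>)))\<^sup>2 / Re (braket \<phi> (\<rho> *v \<phi>))"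
proof -
  have "braket u (\<rho> *v \<phi>) * braket \<phi> (\<rho> *v u) = of_real ((cmod (braket u (\<rho> *v \<phi>)))\<^sup>2)"
    using complex_norm_square[of "braket u (\<rho> *v \<phi>)"]
    by (simp add: hermitian_braket_cnj[OF assms, of \<phi> u])
  then show ?thesis
    unfolding schur_form_def
    by (subst (2) hermitian_braket_diag_real[OF assms]) (simp del: of_real_power)
qed

lemma Cfun_eq_schur_form:
  assumes "hermitian A" "hermitian \<rho>"
  shows "Cfun \<rho> A \<phi> = Re (schur_form \<rho> \<phi> (A *v \<phi>) (A *v \<phi>))"
proof -
  have "braket \<phi> ((A ** \<rho> ** A) *v \<phi>) = braket (A *v \<phi>) (\<rho> *v (A *v \<phi>))"
    and "braket \<phi> ((A ** \<rho>) *v \<phi>) = braket (A *v \<phi>) (\<rho> *v \<phi>)"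
    by (simp_all add: matrix_vector_mul_assoc[symmetric] hermitian_braket_swap[OF assms(1)])
  then show ?thesis
    unfolding Cfun_def wvar_sq_def var_sq_def Re_schur_form_diag[OF assms(2)] by simp
qed

lemma schur_form_diag_eq_braket:
  fixes u :: "complex^'n"
  assumes "hermitian \<rho>" and "braket \<phi> (\<rho> *v \<phi>) \<noteq> 0"
  defines "w \<equiv> u - (braket \<phi> (\<rho> *v u) / braket \<phi> (\<rho> *v \<phi>)) *s \<phi>"
  shows "schur_form \<rho> \<phi> u u = braket w (\<rho> *v w)"
proof -
  define a where "a = braket u (\<rho> *v \<phi>)"
  define r where "r = braket \<phi> (\<rho> *v \<phi>)"
  define t where "t = cnj a / r"
  have cnj_a: "braket \<phi> (\<rho> *v u) = cnj a"
    unfolding a_def by (rule hermitian_braket_cnj[OF assms(1)])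
  have cnj_r: "cnj r = r"
    unfolding r_def by (metis hermitian_braket_cnj[OF assms(1)])
  have "r \<noteq> 0"
    unfolding r_def by (rule assms(2))
  have w_eq: "w = u - t *s \<phi>"
    unfolding w_def t_def cnj_a r_def ..
  have "braket w (\<rho> *v w) = braket u (\<rho> *v u) - t * a - cnj t * cnj a + cnj t * t * r"
    unfolding w_eq
    by (simp add: matrix_vector_mult_diff_distrib vector_scalar_commute braket_diff_left
        braket_diff_right braket_scale_left braket_scale_right cnj_a a_def[symmetric]
        r_def[symmetric] algebra_simps)
  also have "\<dots> = braket u (\<rho> *v u) - a * cnj a / r"
    using \<open>r \<noteq> 0\<close> by (simp add: t_def cnj_r field_simps)
  finally show ?thesis
    unfolding schur_form_def cnj_a a_def[symmetric] r_def[symmetric] by simp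
qed

lemma schur_form_diag_nonneg:
  assumes "density \<rho>" and "Re (braket \<phi> (\<rho> *v \<phi>)) > 0"
  shows "0 \<le> Re (schur_form \<rho> \<phi> u u)"
proof -
  have "braket \<phi> (\<rho> *v \<phi>) \<noteq> 0"
    using assms(2) by auto
  then show ?thesis
    using assms(1) by (simp add: schur_form_diag_eq_braket density_hermitian density_braket_nonneg)
qed

lemma braket_outer: "braket u (outer \<psi> \<psi> *v v) = braket u \<psi> * braket \<psi> v"
  unfolding braket_def outer_def matrix_vector_mult_def
  by (simp add: sum_distrib_left sum_distrib_right mult_ac, rule sum.swap)

lemma schur_form_outer:
  assumes "braket \<phi> (outer \<psi> \<psi> *v \<phi>) \<noteq> 0"
  shows "schur_form (outer \<psi> \<psi>) \<phi> u v = 0"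
  using assms unfolding schur_form_def braket_outer by simp

lemma sum_UNIV_prod:
  "(\<Sum>p\<in>(UNIV::('a::finite \<times> 'b::finite) set). f p) = (\<Sum>i\<in>UNIV. \<Sum>j\<in>UNIV. f (i, j))"
  by (simp add: UNIV_Times_UNIV[symmetric] sum.cartesian_product del: UNIV_Times_UNIV)

lemma kron_mult_vkron: "kron M N *v vkron x y = vkron (M *v x) (N *v y)"
  unfolding kron_def vkron_def matrix_vector_mult_def
  by (simp add: vec_eq_iff sum_UNIV_prod sum_product mult_ac)

lemma braket_vkron: "braket (vkron u v) (vkron x y) = braket u x * braket v y"
  unfolding braket_def vkron_def by (simp add: sum_UNIV_prod sum_product mult_ac)

lemma schur_form_kron_cross:
  assumes "braket \<phi>1 (\<rho>1 *v \<phi>1) \<noteq> 0" and "braket \<phi>2 (\<rho>2 *v \<phi>2) \<noteq> 0"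
  shows "schur_form (kron \<rho>1 \<rho>2) (vkron \<phi>1 \<phi>2) (vkron x \<phi>2) (vkron \<phi>1 y) = 0"
    and "schur_form (kron \<rho>1 \<rho>2) (vkron \<phi>1 \<phi>2) (vkron \<phi>1 y) (vkron x \<phi>2) = 0"
  using assms by (simp_all add: schur_form_def kron_mult_vkron braket_vkron)

lemma Cfun_kron_sum:
  assumes "hermitian \<rho>1" "hermitian \<rho>2" "hermitian A1" "hermitian A2"
    and nonzero: "braket \<phi>1 (\<rho>1 *v \<phi>1) \<noteq> 0" "braket \<phi>2 (\<rho>2 *v \<phi>2) \<noteq> 0"
  shows "Cfun (kron \<rho>1 \<rho>2) (kron A1 (mat 1) + kron (mat 1) A2) (vkron \<phi>1 \<phi>2)
    = Cfun (kron \<rho>1 \<rho>2) (kron A1 (mat 1)) (vkron \<phi>1 \<phi>2)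
      + Cfun (kron \<rho>1 \<rho>2) (kron (mat 1) A2) (vkron \<phi>1 \<phi>2)"
proof -
  have herm: "hermitian (kron \<rho>1 \<rho>2)" "hermitian (kron A1 (mat 1))" "hermitian (kron (mat 1) A2)"
    using assms by (simp_all add: hermitian_kron hermitian_mat_1)
  define S where "S = schur_form (kron \<rho>1 \<rho>2) (vkron \<phi>1 \<phi>2)"
  define u where "u = vkron (A1 *v \<phi>1) \<phi>2"
  define v where "v = vkron \<phi>1 (A2 *v \<phi>2)"
  have "Cfun (kron \<rho>1 \<rho>2) (kron A1 (mat 1) + kron (mat 1) A2) (vkron \<phi>1 \<phi>2)
      = Re (S (u + v) (u + v))"
    by (simp add: Cfun_eq_schur_form herm hermitian_add matrix_vector_mult_add_rdistrib
        kron_mult_vkron S_def u_def v_def)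
  also have "\<dots> = Re (S u u) + Re (S v v)"
    using schur_form_kron_cross[OF nonzero]
    by (simp add: S_def u_def v_def schur_form_add_left schur_form_add_right)
  also have "\<dots> = Cfun (kron \<rho>1 \<rho>2) (kron A1 (mat 1)) (vkron \<phi>1 \<phi>2)
      + Cfun (kron \<rho>1 \<rho>2) (kron (mat 1) A2) (vkron \<phi>1 \<phi>2)"
    by (simp add: Cfun_eq_schur_form herm kron_mult_vkron S_def u_def v_def)
  finally show ?thesis .
qed

theorem mainTheorem9:
  shows
  "(\<forall>(\<rho>::complex^'n::finite^'n) A \<phi>. density \<rho> \<and> hermitian A \<and> unit_vec \<phi> \<and>
        Re (braket \<phi> (\<rho> *v \<phi>)) > 0 \<longrightarrow> Cfun \<rho> A \<phi> \<ge> 0)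
   \<and> (\<forall>(\<rho>::complex^'n^'n) A \<phi>. density \<rho> \<and> pure_state \<rho> \<and> hermitian A \<and> unit_vec \<phi> \<and>
        Re (braket \<phi> (\<rho> *v \<phi>)) > 0 \<longrightarrow> Cfun \<rho> A \<phi> = 0)
   \<and> (\<forall>(\<rho>1::complex^'a::finite^'a) (\<rho>2::complex^'b::finite^'b) \<phi>1 \<phi>2 A1 A2.
        density \<rho>1 \<and> density \<rho>2 \<and> unit_vec \<phi>1 \<and> unit_vec \<phi>2 \<and>
        Re (braket \<phi>1 (\<rho>1 *v \<phi>1)) > 0 \<and> Re (braket \<phi>2 (\<rho>2 *v \<phi>2)) > 0 \<and>
        hermitian A1 \<and> hermitian A2 \<longrightarrow>
        Cfun (kron \<rho>1 \<rho>2) (kron A1 (mat 1) + kron (mat 1) A2) (vkron \<phi>1 \<phi>2)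
        = Cfun (kron \<rho>1 \<rho>2) (kron A1 (mat 1)) (vkron \<phi>1 \<phi>2)
          + Cfun (kron \<rho>1 \<rho>2) (kron (mat 1) A2) (vkron \<phi>1 \<phi>2))"
proof (intro conjI allI impI; elim conjE)
  fix \<rho> A :: "complex^'n::finite^'n" and \<phi>
  assume "density \<rho>" "hermitian A" "Re (braket \<phi> (\<rho> *v \<phi>)) > 0"
  then show "Cfun \<rho> A \<phi> \<ge> 0"
    by (simp add: Cfun_eq_schur_form density_hermitian schur_form_diag_nonneg)
next
  fix \<rho> A :: "complex^'n::finite^'n" and \<phi>
  assume "density \<rho>" "pure_state \<rho>" "hermitian A" "Re (braket \<phi> (\<rho> *v \<phi>)) > 0"
  moreover obtain \<psi> where "\<rho> = outer \<psi> \<psi>"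
    using \<open>pure_state \<rho>\<close> unfolding pure_state_def by blast
  moreover have "braket \<phi> (\<rho> *v \<phi>) \<noteq> 0"
    using \<open>Re (braket \<phi> (\<rho> *v \<phi>)) > 0\<close> by auto
  ultimately show "Cfun \<rho> A \<phi> = 0"
    by (simp add: Cfun_eq_schur_form density_hermitian schur_form_outer)
next
  fix \<rho>1 A1 :: "complex^'a::finite^'a" and \<rho>2 A2 :: "complex^'b::finite^'b" and \<phi>1 \<phi>2
  assume "density \<rho>1" "density \<rho>2" "hermitian A1" "hermitian A2"
    and "Re (braket \<phi>1 (\<rho>1 *v \<phi>1)) > 0" "Re (braket \<phi>2 (\<rho>2 *v \<phi>2)) > 0"
  then show "Cfun (kron \<rho>1 \<rho>2) (kron A1 (mat 1) + kron (mat 1) A2) (vkron \<phi>1 \<phi>2)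
        = Cfun (kron \<rho>1 \<rho>2) (kron A1 (mat 1)) (vkron \<phi>1 \<phi>2)
          + Cfun (kron \<rho>1 \<rho>2) (kron (mat 1) A2) (vkron \<phi>1 \<phi>2)"
    by (intro Cfun_kron_sum) (auto simp: density_hermitian)
qed

end
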